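(* Let $I\subset\mathbb R$ be a bounded closed non-degenerate interval, $r\ge1$, and let $f:I\to\overline{\mathbb R}$ be non-decreasing with $f\in L^r(I)$. Let $a,b\in\mathbb R$ with $a<b$. Then the function $$\psi(\xi)=\big\|f-\big(a\mathbf 1_{[\min I,\xi[}+b\mathbf 1_{[\xi,\max I]}\big)\big\|_{L^r(I)},\qquad \xi\in I,$$ attains its minimal value at $\xi$ if and only if $\xi\in Q^f_{(a+b)/2}$.
   Context: For a non-decreasing $f:I\to\overline{\mathbb R}$ on a closed non-degenerate interval $I$ and $t\in\overline{\mathbb R}$, the $t$-quantile set is $Q^f_t=[\inf\{x\in I:f(x)\ge t\},\ \sup\{x\in I:f(x)\le t\}]$, with the conventions $\inf\varnothing=\max I$, $\sup\varnothing=\min I$. *)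

theory Defs
  imports "HOL-Analysis.Analysis"
begin

definition in_Lr :: "real \<Rightarrow> real \<Rightarrow> real \<Rightarrow> (real \<Rightarrow> ereal) \<Rightarrow> bool" where
  "in_Lr r lo hi f \<longleftrightarrow>
     f \<in> borel_measurable (lebesgue_on {lo..hi}) \<and>
     (AE x in lebesgue_on {lo..hi}. \<bar>f x\<bar> \<noteq> \<infinity>) \<and>
     integrable (lebesgue_on {lo..hi}) (\<lambda>x. \<bar>real_of_ereal (f x)\<bar> powr r)"

definition Lr_dist :: "real \<Rightarrow> real \<Rightarrow> real \<Rightarrow> (real \<Rightarrow> ereal) \<Rightarrow> (real \<Rightarrow> real) \<Rightarrow> real" where
  "Lr_dist r lo hi f g =
     (integral\<^sup>L (lebesgue_on {lo..hi}) (\<lambda>x. \<bar>real_of_ereal (f x) - g x\<bar> powr r)) powr (1 / r)"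

definition step_fun :: "real \<Rightarrow> real \<Rightarrow> real \<Rightarrow> real \<Rightarrow> real" where
  "step_fun a b xi x = (if x < xi then a else b)"

definition quantile_set :: "real \<Rightarrow> real \<Rightarrow> (real \<Rightarrow> ereal) \<Rightarrow> ereal \<Rightarrow> real set" where
  "quantile_set lo hi f t =
     {(if {x\<in>{lo..hi}. f x \<ge> t} = {} then hi else Inf {x\<in>{lo..hi}. f x \<ge> t}) ..
      (if {x\<in>{lo..hi}. f x \<le> t} = {} then lo else Sup {x\<in>{lo..hi}. f x \<le> t})}"

end

theory Submission
  imports Defs
begin

text \<open>Moving the jump of the step function from \<open>l\<close> to \<open>u > l\<close> replaces the value \<open>b\<close> by \<open>a\<close>
  on \<open>[l, u[\<close>, which changes the integrand \<open>|f - step|^r\<close> by \<open>|f - a|^r - |f - b|^r\<close>; this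
  difference has the sign of \<open>f - (a + b)/2\<close>. As \<open>f\<close> is monotone, it lies below the midpoint
  to the left of the quantile set and above it to the right, so moving the jump towards the
  quantile set never increases the cost, and strictly decreases it if the jump starts outside
  (the interval swept over then has positive length).\<close>

lemma powr_le_powr_iff:
  fixes x y p :: real
  assumes "0 \<le> x" "0 \<le> y" "0 < p"
  shows "x powr p \<le> y powr p \<longleftrightarrow> x \<le> y"
  using assms by (meson linorder_not_less powr_less_mono2 powr_mono2 less_imp_le)

text \<open>Change of the pointwise cost \<open>|y - step|^r\<close> when the step value \<open>b\<close> is replaced by \<open>a\<close>.\<close>
definition swap_cost :: "real \<Rightarrow> real \<Rightarrow> real \<Rightarrow> real \<Rightarrow> real" where
  "swap_cost r a b y = \<bar>y - a\<bar> powr r - \<bar>y - b\<bar> powr r"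

lemma swap_cost_nonpos_iff:
  fixes r a b :: real and e :: ereal
  assumes "a < b" "0 < r" "\<bar>e\<bar> \<noteq> \<infinity>"
  shows "swap_cost r a b (real_of_ereal e) \<le> 0 \<longleftrightarrow> e \<le> ereal ((a + b) / 2)"
proof -
  obtain y where e: "e = ereal y" using assms(3) by (cases e) auto
  have "swap_cost r a b y \<le> 0 \<longleftrightarrow> \<bar>y - a\<bar> \<le> \<bar>y - b\<bar>"
    unfolding swap_cost_def using powr_le_powr_iff[of "\<bar>y - a\<bar>" "\<bar>y - b\<bar>" r] assms(2) by simp
  also have "\<dots> \<longleftrightarrow> y \<le> (a + b) / 2" using assms(1) by (auto simp: abs_if)
  finally show ?thesis using e by simp
qed

lemma swap_cost_neg_iff:
  fixes r a b :: real and e :: ereal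
  assumes "a < b" "0 < r" "\<bar>e\<bar> \<noteq> \<infinity>"
  shows "swap_cost r a b (real_of_ereal e) < 0 \<longleftrightarrow> e < ereal ((a + b) / 2)"
proof -
  obtain y where e: "e = ereal y" using assms(3) by (cases e) auto
  have "swap_cost r a b y < 0 \<longleftrightarrow> \<bar>y - a\<bar> < \<bar>y - b\<bar>"
    unfolding swap_cost_def using powr_le_powr_iff[of "\<bar>y - b\<bar>" "\<bar>y - a\<bar>" r] assms(2) by auto
  also have "\<dots> \<longleftrightarrow> y < (a + b) / 2" using assms(1) by (auto simp: abs_if)
  finally show ?thesis using e by simp
qed

definition quantile_lower :: "real \<Rightarrow> real \<Rightarrow> (real \<Rightarrow> ereal) \<Rightarrow> ereal \<Rightarrow> real" where
  "quantile_lower lo hi f t =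
     (if {x\<in>{lo..hi}. f x \<ge> t} = {} then hi else Inf {x\<in>{lo..hi}. f x \<ge> t})"

definition quantile_upper :: "real \<Rightarrow> real \<Rightarrow> (real \<Rightarrow> ereal) \<Rightarrow> ereal \<Rightarrow> real" where
  "quantile_upper lo hi f t =
     (if {x\<in>{lo..hi}. f x \<le> t} = {} then lo else Sup {x\<in>{lo..hi}. f x \<le> t})"

lemma quantile_set_eq: "quantile_set lo hi f t = {quantile_lower lo hi f t .. quantile_upper lo hi f t}"
  unfolding quantile_set_def quantile_lower_def quantile_upper_def ..

lemma quantile_lower_mem:
  assumes "lo \<le> hi"
  shows "quantile_lower lo hi f t \<in> {lo..hi}"
proof (cases "{x\<in>{lo..hi}. f x \<ge> t} = {}")
  case False
  let ?S = "{x\<in>{lo..hi}. f x \<ge> t}"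
  obtain y where y: "y \<in> ?S" using False by blast
  have "bdd_below ?S" by (rule bdd_belowI[of _ lo]) auto
  with y have "Inf ?S \<le> y" by (rule cInf_lower)
  with y have "Inf ?S \<le> hi" by simp
  moreover have "lo \<le> Inf ?S" using False by (intro cInf_greatest) auto
  ultimately show ?thesis using False unfolding quantile_lower_def by simp
qed (use assms in \<open>simp add: quantile_lower_def\<close>)

lemma quantile_upper_mem:
  assumes "lo \<le> hi"
  shows "quantile_upper lo hi f t \<in> {lo..hi}"
proof (cases "{x\<in>{lo..hi}. f x \<le> t} = {}")
  case False
  let ?S = "{x\<in>{lo..hi}. f x \<le> t}"
  obtain y where y: "y \<in> ?S" using False by blast
  have "bdd_above ?S" by (rule bdd_aboveI[of _ hi]) auto
  with y have "y \<le> Sup ?S" by (rule cSup_upper)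
  with y have "lo \<le> Sup ?S" by simp
  moreover have "Sup ?S \<le> hi" using False by (intro cSup_least) auto
  ultimately show ?thesis using False unfolding quantile_upper_def by simp
qed (use assms in \<open>simp add: quantile_upper_def\<close>)

lemma less_quantile_lowerD:
  assumes "x \<in> {lo..hi}" "x < quantile_lower lo hi f t"
  shows "f x < t"
proof (rule ccontr)
  let ?S = "{x\<in>{lo..hi}. f x \<ge> t}"
  assume "\<not> f x < t"
  then have "x \<in> ?S" using assms(1) by auto
  moreover have "bdd_below ?S" by (rule bdd_belowI[of _ lo]) auto
  ultimately have "Inf ?S \<le> x" by (rule cInf_lower)
  moreover have "quantile_lower lo hi f t = Inf ?S"
    using \<open>x \<in> ?S\<close> unfolding quantile_lower_def by auto
  ultimately show False using assms(2) by linarith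
qed

lemma quantile_upper_lessD:
  assumes "x \<in> {lo..hi}" "quantile_upper lo hi f t < x"
  shows "t < f x"
proof (rule ccontr)
  let ?S = "{x\<in>{lo..hi}. f x \<le> t}"
  assume "\<not> t < f x"
  then have "x \<in> ?S" using assms(1) by auto
  moreover have "bdd_above ?S" by (rule bdd_aboveI[of _ hi]) auto
  ultimately have "x \<le> Sup ?S" by (rule cSup_upper)
  moreover have "quantile_upper lo hi f t = Sup ?S"
    using \<open>x \<in> ?S\<close> unfolding quantile_upper_def by auto
  ultimately show False using assms(2) by linarith
qed

lemma quantile_lower_lessD:
  assumes "mono_on {lo..hi} f" "x \<in> {lo..hi}" "quantile_lower lo hi f t < x"
  shows "t \<le> f x"
proof -
  let ?S = "{x\<in>{lo..hi}. f x \<ge> t}"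
  have ne: "?S \<noteq> {}"
    using assms(2,3) unfolding quantile_lower_def by (cases "?S = {}") auto
  then have "quantile_lower lo hi f t = Inf ?S"
    unfolding quantile_lower_def by (rule if_not_P)
  with assms(3) have "Inf ?S < x" by (rule back_subst)
  from cInf_lessD[OF ne this] obtain y where y: "y \<in> ?S" "y < x" ..
  then have "t \<le> f y" "f y \<le> f x" using assms(1,2) by (auto intro: mono_onD)
  then show ?thesis by (rule order.trans)
qed

lemma less_quantile_upperD:
  assumes "mono_on {lo..hi} f" "x \<in> {lo..hi}" "x < quantile_upper lo hi f t"
  shows "f x \<le> t"
proof -
  let ?S = "{x\<in>{lo..hi}. f x \<le> t}"
  have ne: "?S \<noteq> {}"
    using assms(2,3) unfolding quantile_upper_def by (cases "?S = {}") auto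
  then have "quantile_upper lo hi f t = Sup ?S"
    unfolding quantile_upper_def by (rule if_not_P)
  with assms(3) have "x < Sup ?S" by (rule back_subst)
  from less_cSupD[OF ne this] obtain y where y: "y \<in> ?S" "x < y" ..
  then have "f x \<le> f y" "f y \<le> t" using assms(1,2) by (auto intro: mono_onD)
  then show ?thesis by (rule order.trans)
qed

lemma AE_lebesgue_on_neq:
  assumes "c \<in> {lo..hi}"
  shows "AE x in lebesgue_on {lo..hi}. x \<noteq> (c::real)"
  using assms by (intro AE_discrete_difference[where X="{c}", simplified])
    (auto simp: emeasure_restrict_space sets_restrict_space_iff)

lemma integral_pos_lebesgue_on:
  fixes g :: "real \<Rightarrow> real"
  assumes "integrable (lebesgue_on {lo..hi}) g"
    and "AE x in lebesgue_on {lo..hi}. 0 \<le> g x"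
    and "AE x in lebesgue_on {lo..hi}. x \<in> {l<..<u} \<longrightarrow> 0 < g x"
    and "lo \<le> l" "l < u" "u \<le> hi"
  shows "0 < integral\<^sup>L (lebesgue_on {lo..hi}) g"
proof -
  have "integral\<^sup>L (lebesgue_on {lo..hi}) g \<noteq> 0"
  proof
    assume "integral\<^sup>L (lebesgue_on {lo..hi}) g = 0"
    then have "AE x in lebesgue_on {lo..hi}. g x = 0"
      using integral_nonneg_eq_0_iff_AE[OF assms(1,2)] by simp
    with assms(3) have "AE x in lebesgue_on {lo..hi}. x \<notin> {l<..<u}"
      by eventually_elim auto
    moreover have "emeasure (lebesgue_on {lo..hi}) {l<..<u} \<noteq> 0"
      using assms(4-6) by (subst emeasure_restrict_space) auto
    ultimately show False
      using assms(4-6) by (subst (asm) AE_iff_measurable[where N="{l<..<u}"])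
        (auto simp: sets_restrict_space_iff)
  qed
  with integral_nonneg_AE[OF assms(2)] show ?thesis by linarith
qed

lemma abs_diff_powr_le:
  fixes y z C r :: real
  assumes "0 \<le> r" "\<bar>z\<bar> \<le> C"
  shows "\<bar>y - z\<bar> powr r \<le> 2 powr r * (\<bar>y\<bar> powr r + C powr r)"
proof -
  have "\<bar>y - z\<bar> powr r \<le> (2 * max \<bar>y\<bar> C) powr r"
    using assms by (intro powr_mono2) auto
  also have "\<dots> = 2 powr r * max \<bar>y\<bar> C powr r"
    using assms by (subst powr_mult) auto
  also have "\<dots> \<le> 2 powr r * (\<bar>y\<bar> powr r + C powr r)"
    by (intro mult_left_mono) (auto simp: max_def)
  finally show ?thesis .
qed

lemma integrable_Lr_diff_bounded:
  assumes "in_Lr r lo hi f" "0 < r"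
    and "g \<in> borel_measurable (lebesgue_on {lo..hi})" "\<And>x. \<bar>g x\<bar> \<le> C"
  shows "integrable (lebesgue_on {lo..hi}) (\<lambda>x. \<bar>real_of_ereal (f x) - g x\<bar> powr r)"
proof (rule Bochner_Integration.integrable_bound)
  have "finite_measure (lebesgue_on {lo..hi})"
    by (rule finite_measure_lebesgue_on) simp
  then show "integrable (lebesgue_on {lo..hi})
      (\<lambda>x. 2 powr r * (\<bar>real_of_ereal (f x)\<bar> powr r + C powr r))"
    using assms(1) unfolding in_Lr_def
    by (intro integrable_mult_right integrable_add finite_measure.integrable_const) auto
  have "(\<lambda>x. real_of_ereal (f x)) \<in> borel_measurable (lebesgue_on {lo..hi})"
    using assms(1) borel_measurable_real_of_ereal unfolding in_Lr_def by (auto intro: measurable_compose)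
  with assms(3) show "(\<lambda>x. \<bar>real_of_ereal (f x) - g x\<bar> powr r) \<in> borel_measurable (lebesgue_on {lo..hi})"
    by measurable
  show "AE x in lebesgue_on {lo..hi}. norm (\<bar>real_of_ereal (f x) - g x\<bar> powr r)
      \<le> norm (2 powr r * (\<bar>real_of_ereal (f x)\<bar> powr r + C powr r))"
  proof (rule AE_I2)
    fix x
    show "norm (\<bar>real_of_ereal (f x) - g x\<bar> powr r)
        \<le> norm (2 powr r * (\<bar>real_of_ereal (f x)\<bar> powr r + C powr r))"
      using abs_diff_powr_le[OF _ assms(4), of r "real_of_ereal (f x)" x] assms(2)
      unfolding real_norm_def by (smt (verit) powr_ge_zero)
  qed
qed

definition Lr_integral :: "real \<Rightarrow> real \<Rightarrow> real \<Rightarrow> (real \<Rightarrow> ereal) \<Rightarrow> (real \<Rightarrow> real) \<Rightarrow> real" where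
  "Lr_integral r lo hi f g =
     integral\<^sup>L (lebesgue_on {lo..hi}) (\<lambda>x. \<bar>real_of_ereal (f x) - g x\<bar> powr r)"

lemma Lr_dist_le_iff:
  assumes "0 < r"
  shows "Lr_dist r lo hi f g \<le> Lr_dist r lo hi f g' \<longleftrightarrow> Lr_integral r lo hi f g \<le> Lr_integral r lo hi f g'"
  unfolding Lr_dist_def Lr_integral_def using assms
  by (intro powr_le_powr_iff integral_nonneg) auto

lemma step_fun_borel_measurable: "step_fun a b xi \<in> borel_measurable (lebesgue_on S)"
  unfolding step_fun_def by measurable (auto simp: id_def[symmetric])

lemma Lr_integral_step_diff:
  assumes "in_Lr r lo hi f" "0 < r" "l \<le> u"
  shows "integrable (lebesgue_on {lo..hi})
           (\<lambda>x. indicator {l..<u} x * swap_cost r a b (real_of_ereal (f x)))" (is ?int)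
    and "Lr_integral r lo hi f (step_fun a b u) - Lr_integral r lo hi f (step_fun a b l)
       = integral\<^sup>L (lebesgue_on {lo..hi})
           (\<lambda>x. indicator {l..<u} x * swap_cost r a b (real_of_ereal (f x)))" (is ?eq)
proof -
  have int_step: "integrable (lebesgue_on {lo..hi})
          (\<lambda>x. \<bar>real_of_ereal (f x) - step_fun a b eta x\<bar> powr r)" for eta
    using assms(1,2) step_fun_borel_measurable
    by (rule integrable_Lr_diff_bounded[where C="max \<bar>a\<bar> \<bar>b\<bar>"]) (auto simp: step_fun_def)
  have pointwise: "\<bar>y - step_fun a b u x\<bar> powr r - \<bar>y - step_fun a b l x\<bar> powr r
      = indicator {l..<u} x * swap_cost r a b y" for x y
    using assms(3) by (auto simp: step_fun_def swap_cost_def indicator_def)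
  show ?int
    using Bochner_Integration.integrable_diff[OF int_step int_step, of u l] by (simp add: pointwise)
  show ?eq
    unfolding Lr_integral_def
    by (subst Bochner_Integration.integral_diff[symmetric]) (simp_all add: pointwise int_step)
qed

context
  fixes r lo hi a b :: real and f :: "real \<Rightarrow> ereal"
  assumes r_pos: "0 < r" and f_Lr: "in_Lr r lo hi f" and a_less_b: "a < b"
begin

private lemma AE_mem_finite: "AE x in lebesgue_on {lo..hi}. x \<in> {lo..hi} \<and> \<bar>f x\<bar> \<noteq> \<infinity>"
  using f_Lr AE_space unfolding in_Lr_def by force

lemma Lr_integral_step_le_if_above_mid:
  assumes "l \<le> u" "l \<in> {lo..hi}"
    and "\<And>x. x \<in> {lo..hi} \<Longrightarrow> l < x \<Longrightarrow> x < u \<Longrightarrow> ereal ((a + b) / 2) \<le> f x"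
  shows "Lr_integral r lo hi f (step_fun a b l) \<le> Lr_integral r lo hi f (step_fun a b u)"
proof -
  have "AE x in lebesgue_on {lo..hi}.
      0 \<le> indicator {l..<u} x * swap_cost r a b (real_of_ereal (f x))"
    using AE_mem_finite AE_lebesgue_on_neq[OF assms(2)]
  proof eventually_elim
    case (elim x)
    then show ?case
      using assms(3)[of x] swap_cost_neg_iff[OF a_less_b r_pos, of "f x"]
      by (auto simp: indicator_def not_less)
  qed
  then have "0 \<le> integral\<^sup>L (lebesgue_on {lo..hi})
      (\<lambda>x. indicator {l..<u} x * swap_cost r a b (real_of_ereal (f x)))"
    by (rule integral_nonneg_AE)
  with Lr_integral_step_diff(2)[OF f_Lr r_pos assms(1), of a b] show ?thesis by linarith
qed

lemma Lr_integral_step_le_if_below_mid: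
  assumes "l \<le> u"
    and "\<And>x. x \<in> {lo..hi} \<Longrightarrow> l \<le> x \<Longrightarrow> x < u \<Longrightarrow> f x \<le> ereal ((a + b) / 2)"
  shows "Lr_integral r lo hi f (step_fun a b u) \<le> Lr_integral r lo hi f (step_fun a b l)"
proof -
  have "AE x in lebesgue_on {lo..hi}.
      0 \<le> - (indicator {l..<u} x * swap_cost r a b (real_of_ereal (f x)))"
    using AE_mem_finite
  proof eventually_elim
    case (elim x)
    then show ?case
      using assms(2)[of x] swap_cost_nonpos_iff[OF a_less_b r_pos, of "f x"]
      by (auto simp: indicator_def)
  qed
  then have "0 \<le> integral\<^sup>L (lebesgue_on {lo..hi})
      (\<lambda>x. - (indicator {l..<u} x * swap_cost r a b (real_of_ereal (f x))))"
    by (rule integral_nonneg_AE)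
  with Lr_integral_step_diff(2)[OF f_Lr r_pos assms(1), of a b] show ?thesis by simp
qed

lemma Lr_integral_step_less_if_above_mid:
  assumes "l < u" "l \<in> {lo..hi}" "u \<in> {lo..hi}"
    and "\<And>x. x \<in> {lo..hi} \<Longrightarrow> l < x \<Longrightarrow> x < u \<Longrightarrow> ereal ((a + b) / 2) < f x"
  shows "Lr_integral r lo hi f (step_fun a b l) < Lr_integral r lo hi f (step_fun a b u)"
proof -
  have pos: "0 < swap_cost r a b (real_of_ereal (f x))"
    if "x \<in> {lo..hi}" "\<bar>f x\<bar> \<noteq> \<infinity>" "l < x" "x < u" for x
    using assms(4)[OF that(1,3,4)] swap_cost_nonpos_iff[OF a_less_b r_pos that(2)]
    by (meson not_le)
  have "0 < integral\<^sup>L (lebesgue_on {lo..hi})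
      (\<lambda>x. indicator {l..<u} x * swap_cost r a b (real_of_ereal (f x)))"
  proof (rule integral_pos_lebesgue_on)
    show "AE x in lebesgue_on {lo..hi}.
        0 \<le> indicator {l..<u} x * swap_cost r a b (real_of_ereal (f x))"
      using AE_mem_finite AE_lebesgue_on_neq[OF assms(2)]
      by eventually_elim (use pos in \<open>fastforce simp: indicator_def intro: less_imp_le\<close>)
    show "AE x in lebesgue_on {lo..hi}. x \<in> {l<..<u} \<longrightarrow>
        0 < indicator {l..<u} x * swap_cost r a b (real_of_ereal (f x))"
      using AE_mem_finite by eventually_elim (use pos in simp)
  qed (use Lr_integral_step_diff(1)[OF f_Lr r_pos, of l u] assms in auto)
  with Lr_integral_step_diff(2)[OF f_Lr r_pos, of l u a b] assms(1) show ?thesis by simp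
qed

lemma Lr_integral_step_less_if_below_mid:
  assumes "l < u" "l \<in> {lo..hi}" "u \<in> {lo..hi}"
    and "\<And>x. x \<in> {lo..hi} \<Longrightarrow> l \<le> x \<Longrightarrow> x < u \<Longrightarrow> f x < ereal ((a + b) / 2)"
  shows "Lr_integral r lo hi f (step_fun a b u) < Lr_integral r lo hi f (step_fun a b l)"
proof -
  have neg: "swap_cost r a b (real_of_ereal (f x)) < 0"
    if "x \<in> {lo..hi}" "\<bar>f x\<bar> \<noteq> \<infinity>" "l \<le> x" "x < u" for x
    using assms(4)[OF that(1,3,4)] swap_cost_neg_iff[OF a_less_b r_pos that(2)] by simp
  have "0 < integral\<^sup>L (lebesgue_on {lo..hi})
      (\<lambda>x. - (indicator {l..<u} x * swap_cost r a b (real_of_ereal (f x))))"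
  proof (rule integral_pos_lebesgue_on)
    show "AE x in lebesgue_on {lo..hi}.
        0 \<le> - (indicator {l..<u} x * swap_cost r a b (real_of_ereal (f x)))"
      using AE_mem_finite
    proof eventually_elim
      case (elim x)
      then show ?case using neg[of x] by (simp add: indicator_def less_imp_le)
    qed
    show "AE x in lebesgue_on {lo..hi}. x \<in> {l<..<u} \<longrightarrow>
        0 < - (indicator {l..<u} x * swap_cost r a b (real_of_ereal (f x)))"
      using AE_mem_finite by eventually_elim (use neg in simp)
  qed (use Lr_integral_step_diff(1)[OF f_Lr r_pos, of l u] assms in auto)
  with Lr_integral_step_diff(2)[OF f_Lr r_pos, of l u a b] assms(1) show ?thesis by simp
qed

context
  assumes f_mono: "mono_on {lo..hi} f"
begin

lemma Lr_integral_step_le_if_quantile: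
  assumes xi: "xi \<in> {lo..hi}" "xi \<in> quantile_set lo hi f (ereal ((a + b) / 2))"
    and eta: "eta \<in> {lo..hi}"
  shows "Lr_integral r lo hi f (step_fun a b xi) \<le> Lr_integral r lo hi f (step_fun a b eta)"
proof (cases "xi \<le> eta")
  case True
  then show ?thesis
    using xi by (intro Lr_integral_step_le_if_above_mid quantile_lower_lessD[OF f_mono])
      (auto simp: quantile_set_eq)
next
  case False
  then show ?thesis
    using xi by (intro Lr_integral_step_le_if_below_mid less_quantile_upperD[OF f_mono])
      (auto simp: quantile_set_eq)
qed

lemma Lr_integral_step_less_if_not_quantile:
  assumes "lo \<le> hi" "xi \<in> {lo..hi}" "xi \<notin> quantile_set lo hi f (ereal ((a + b) / 2))"
  shows "\<exists>eta\<in>{lo..hi}.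
    Lr_integral r lo hi f (step_fun a b eta) < Lr_integral r lo hi f (step_fun a b xi)"
proof -
  let ?c = "quantile_lower lo hi f (ereal ((a + b) / 2))"
  let ?d = "quantile_upper lo hi f (ereal ((a + b) / 2))"
  have c: "?c \<in> {lo..hi}" and d: "?d \<in> {lo..hi}"
    using assms(1) by (rule quantile_lower_mem quantile_upper_mem)+
  consider "xi < ?c" | "?d < xi" using assms(3) unfolding quantile_set_eq by force
  then show ?thesis
  proof cases
    case 1
    with assms(2) c have "Lr_integral r lo hi f (step_fun a b ?c) < Lr_integral r lo hi f (step_fun a b xi)"
      by (intro Lr_integral_step_less_if_below_mid less_quantile_lowerD) auto
    with c show ?thesis ..
  next
    case 2
    with assms(2) d have "Lr_integral r lo hi f (step_fun a b ?d) < Lr_integral r lo hi f (step_fun a b xi)"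
      by (intro Lr_integral_step_less_if_above_mid quantile_upper_lessD) auto
    with d show ?thesis ..
  qed
qed

end

end

theorem lemma4p1:
  fixes lo hi r a b xi :: real and f :: "real \<Rightarrow> ereal"
  assumes "lo < hi" and "r \<ge> 1"
    and "mono_on {lo..hi} f" and "in_Lr r lo hi f"
    and "a < b" and "xi \<in> {lo..hi}"
  shows "(\<forall>eta\<in>{lo..hi}. Lr_dist r lo hi f (step_fun a b xi) \<le> Lr_dist r lo hi f (step_fun a b eta))
         \<longleftrightarrow> xi \<in> quantile_set lo hi f (ereal ((a + b) / 2))"
proof -
  have r: "0 < r" using assms(2) by simp
  note le = Lr_integral_step_le_if_quantile[OF r assms(4,5,3,6)]
  note less = Lr_integral_step_less_if_not_quantile[OF r assms(4,5,3) _ assms(6)]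
  show ?thesis
    unfolding Lr_dist_le_iff[OF r]
    using le less assms(1) by (meson less_imp_le not_le)
qed

end
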